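(* Let $G$, $k\ge 3$, the choice strings $c_{i,j}$, the template string $t$, $L$ and $d$ be as in the binary construction in the context, and let $s\in\{0,1\}^L$ be a solution, i.e. $t$ and every choice string $c_{i,j}$ ($1\le i<j\le k$) have a substring of length $L$ at Hamming distance at most $d$ from $s$. Then the encoding part of $s$ contains exactly $k$ symbols $1$, and these correspond to a clique of size $k$ in $G$: for $p=1,\dots,k$ the $p$-th section of the encoding part of $s$ equals $\mathrm{number}(h_p)$ for some $h_p$, and $v_{h_1},\dots,v_{h_k}$ form a clique of size $k$ in $G$.
   Context: Let $G=(V,E)$ be an undirected simple graph with $V=\{v_1,\dots,v_n\}$ and edge set $E=\{e_1,\dots,e_m\}$, and let $k\ge 3$ be an integer; put $N=\binom{k}{2}$ and $b=nk-2k+2$. All strings are over $\{0,1\}$. For $1\le p\le n$ let $\mathrm{number}(p)=0^{p-1}10^{n-p}$. Let $\mathrm{front\_tag}=(1^{3nk}0)^{nk}$ (length $(3nk+1)nk$). Order the pairs $(i,j)$, $1\le i<j\le k$, lexicographically and let $i'$ be the position of $(i,j)$ in this order. For an edge $e$ joining $v_r,v_s$ with $r<s$ let $\mathrm{encode}(i,j,e)=(0^n)^{i-1}\,\mathrm{number}(r)\,(0^n)^{j-i-1}\,\mathrm{number}(s)\,(0^n)^{k-j}$, $\mathrm{back\_tag}(i')=0^{(i'-1)b}1^{b}0^{(N-i')b}$, and $\mathrm{block}(i,j,e)=\mathrm{front\_tag}\,\mathrm{encode}(i,j,e)\,\mathrm{back\_tag}(i')$. The choice string is $c_{i,j}=\mathrm{block}(i,j,e_1)\cdots\mathrm{block}(i,j,e_m)$.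 The template string is $t=\mathrm{front\_tag}\,1^{nk}\,0^{Nb}$. Set $L=(3nk+1)nk+nk+Nb$ and $d=nk-k$. For a string $s$ of length $L$, its encoding part is the substring of its positions $(3nk+1)nk+1,\dots,(3nk+1)nk+nk$, divided into $k$ consecutive sections of length $n$. *)

theory Defs
  imports Main
begin

text \<open>Binary strings are bool lists (True = symbol 1, False = symbol 0).
  Vertices are numbered 1..n; a graph is given by the list of its edges
  e_1,...,e_m, each edge stored as a pair (r,s) with r < s.\<close>

definition zeros :: "nat \<Rightarrow> bool list" where
  "zeros l = replicate l False"

definition ones :: "nat \<Rightarrow> bool list" where
  "ones l = replicate l True"

definition number :: "nat \<Rightarrow> nat \<Rightarrow> bool list" where
  "number n p = zeros (p - 1) @ [True] @ zeros (n - p)"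

definition front_tag :: "nat \<Rightarrow> nat \<Rightarrow> bool list" where
  "front_tag n k = concat (replicate (n * k) (ones (3 * n * k) @ [False]))"

definition NN :: "nat \<Rightarrow> nat" where
  "NN k = k choose 2"

definition bb :: "nat \<Rightarrow> nat \<Rightarrow> nat" where
  "bb n k = n * k - 2 * k + 2"

definition pair_index :: "nat \<Rightarrow> nat \<Rightarrow> nat \<Rightarrow> nat" where
  "pair_index k i j =
     card {(a, b). 1 \<le> a \<and> a < b \<and> b \<le> k \<and> (a < i \<or> (a = i \<and> b < j))} + 1"

definition encode :: "nat \<Rightarrow> nat \<Rightarrow> nat \<Rightarrow> nat \<Rightarrow> nat \<times> nat \<Rightarrow> bool list" where
  "encode n k i j e = (case e of (r, s) \<Rightarrow>
     concat (replicate (i - 1) (zeros n)) @ number n r @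
     concat (replicate (j - i - 1) (zeros n)) @ number n s @
     concat (replicate (k - j) (zeros n)))"

definition back_tag :: "nat \<Rightarrow> nat \<Rightarrow> nat \<Rightarrow> bool list" where
  "back_tag n k i' = zeros ((i' - 1) * bb n k) @ ones (bb n k) @ zeros ((NN k - i') * bb n k)"

definition block :: "nat \<Rightarrow> nat \<Rightarrow> nat \<Rightarrow> nat \<Rightarrow> nat \<times> nat \<Rightarrow> bool list" where
  "block n k i j e = front_tag n k @ encode n k i j e @ back_tag n k (pair_index k i j)"

definition choice_string :: "nat \<Rightarrow> nat \<Rightarrow> (nat \<times> nat) list \<Rightarrow> nat \<Rightarrow> nat \<Rightarrow> bool list" where
  "choice_string n k es i j = concat (map (block n k i j) es)"

definition template :: "nat \<Rightarrow> nat \<Rightarrow> bool list" where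
  "template n k = front_tag n k @ ones (n * k) @ zeros (NN k * bb n k)"

definition LL :: "nat \<Rightarrow> nat \<Rightarrow> nat" where
  "LL n k = (3 * n * k + 1) * n * k + n * k + NN k * bb n k"

definition dd :: "nat \<Rightarrow> nat \<Rightarrow> nat" where
  "dd n k = n * k - k"

definition hamming :: "bool list \<Rightarrow> bool list \<Rightarrow> nat" where
  "hamming u v = length (filter (\<lambda>(x, y). x \<noteq> y) (zip u v))"

definition close_substring :: "nat \<Rightarrow> bool list \<Rightarrow> bool list \<Rightarrow> bool" where
  "close_substring d s c = (\<exists>u w v. c = u @ w @ v \<and> length w = length s \<and> hamming w s \<le> d)"

definition is_solution :: "nat \<Rightarrow> nat \<Rightarrow> (nat \<times> nat) list \<Rightarrow> bool list \<Rightarrow> bool" where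
  "is_solution n k es s \<longleftrightarrow> length s = LL n k \<and>
     close_substring (dd n k) s (template n k) \<and>
     (\<forall>i j. 1 \<le> i \<and> i < j \<and> j \<le> k \<longrightarrow> close_substring (dd n k) s (choice_string n k es i j))"

definition encoding_part :: "nat \<Rightarrow> nat \<Rightarrow> bool list \<Rightarrow> bool list" where
  "encoding_part n k s = take (n * k) (drop ((3 * n * k + 1) * n * k) s)"

definition enc_section :: "nat \<Rightarrow> nat \<Rightarrow> bool list \<Rightarrow> bool list" where
  "enc_section n p x = take n (drop ((p - 1) * n) x)"

definition simple_graph :: "nat \<Rightarrow> (nat \<times> nat) list \<Rightarrow> bool" where
  "simple_graph n es \<longleftrightarrow> distinct es \<and> (\<forall>(r, s) \<in> set es. 1 \<le> r \<and> r < s \<and> s \<le> n)"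

definition adjacent :: "(nat \<times> nat) list \<Rightarrow> nat \<Rightarrow> nat \<Rightarrow> bool" where
  "adjacent es u v \<longleftrightarrow> (u, v) \<in> set es \<or> (v, u) \<in> set es"

end

theory Submission
  imports Defs
begin

text \<open>The block of any edge differs from the template in exactly \<open>2d\<close> places: the \<open>nk - 2\<close>
  zeros of its encoding and the \<open>b\<close> ones of its back tag. A window of a choice string that is
  not aligned with its blocks is more than \<open>2d\<close> away from the template, because the front tag
  has a single zero in each period of length \<open>3nk + 1\<close>. Hence for every pair \<open>i < j\<close> the
  solution \<open>s\<close>, being within \<open>d\<close> of the template, is within \<open>d\<close> of the block of some edge and
  hence a Hamming midpoint of the two: \<open>s\<close> differs from the template in exactly \<open>d\<close> places,
  all of them mismatches of that block. The back tags of the pairs \<open>(1,2)\<close> and \<open>(1,3)\<close> are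
  disjoint, so these places lie in the encoding part, which therefore has \<open>nk - d = k\<close> ones.
  Every section contains the one coming from some pair, hence exactly one, and the ones of
  sections \<open>i\<close> and \<open>j\<close> are the endpoints of the edge chosen for \<open>(i,j)\<close>.\<close>

section \<open>Mismatch sets and Hamming distance\<close>

definition mismatches :: "bool list \<Rightarrow> bool list \<Rightarrow> nat set" where
  "mismatches u v = {p. p < length u \<and> p < length v \<and> u ! p \<noteq> v ! p}"

lemma finite_mismatches [simp]: "finite (mismatches u v)"
  by (simp add: mismatches_def)

lemma mismatches_self [simp]: "mismatches u u = {}"
  by (simp add: mismatches_def)

lemma mismatches_commute: "mismatches u v = mismatches v u"
  by (auto simp: mismatches_def)

lemma hamming_eq_card_mismatches: "hamming u v = card (mismatches u v)"
  unfolding hamming_def mismatches_def length_filter_conv_card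
  by (intro arg_cong[where f = card]) auto

lemma mismatches_trans:
  assumes "length u = length v" "length v = length w"
  shows "mismatches u w = sym_diff (mismatches u v) (mismatches v w)"
  using assms by (auto simp: mismatches_def)

lemma hamming_triangle:
  assumes "length u = length v" "length v = length w"
  shows "hamming u w \<le> hamming u v + hamming v w"
proof -
  have "mismatches u w \<subseteq> mismatches u v \<union> mismatches v w"
    using mismatches_trans[OF assms] by blast
  then have "card (mismatches u w) \<le> card (mismatches u v \<union> mismatches v w)"
    by (intro card_mono) simp_all
  also have "\<dots> \<le> card (mismatches u v) + card (mismatches v w)"
    by (rule card_Un_le)
  finally show ?thesis by (simp add: hamming_eq_card_mismatches)
qed

lemma hamming_midpoint:
  assumes "length u = length v" "length v = length w"
    and "hamming u w = 2 * d" "hamming u v \<le> d" "hamming v w \<le> d"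
  shows "mismatches v w \<subseteq> mismatches u w" "hamming v w = d"
proof -
  let ?D = "mismatches u w" and ?X = "mismatches v w"
  have sym_diff: "mismatches u v = sym_diff ?D ?X"
    using assms(1,2) by (auto simp: mismatches_def)
  have "card (mismatches u v) = card (?D - ?X) + card (?X - ?D)"
    unfolding sym_diff by (rule card_Un_disjoint) auto
  moreover have "card ?D - card ?X \<le> card (?D - ?X)"
    by (rule diff_card_le_card_Diff) simp
  ultimately have "card (?X - ?D) = 0" "d \<le> card ?X"
    using assms(3-5) unfolding hamming_eq_card_mismatches by linarith+
  then show "?X \<subseteq> ?D" "hamming v w = d"
    using assms(5) unfolding hamming_eq_card_mismatches by auto
qed

lemma mismatches_append:
  assumes "length a = length c"
  shows "mismatches (a @ b) (c @ d) = mismatches a c \<union> (+) (length a) ` mismatches b d"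
proof (rule set_eqI)
  fix p
  show "p \<in> mismatches (a @ b) (c @ d) \<longleftrightarrow> p \<in> mismatches a c \<union> (+) (length a) ` mismatches b d"
  proof (cases "p < length a")
    case False
    then obtain q where "p = length a + q" using le_Suc_ex not_less by blast
    then show ?thesis using assms by (auto simp: mismatches_def nth_append)
  qed (use assms in \<open>auto simp: mismatches_def nth_append\<close>)
qed

lemma mismatches_map_upt:
  "mismatches (map f [0..<m]) (map g [0..<m]) = {p. p < m \<and> f p \<noteq> g p}"
  by (auto simp: mismatches_def)

lemma count_list_True_eq_card: "count_list xs True = card {i. i < length xs \<and> xs ! i}"
  by (simp add: count_list_eq_length_filter length_filter_conv_card eq_commute)

lemma count_list_map_upt_True: "count_list (map f [0..<m]) True = card {q. q < m \<and> f q}"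
  unfolding count_list_True_eq_card by (intro arg_cong[where f = card]) auto

section \<open>Substrings of concatenated blocks\<close>

lemma take_drop_concat_equal_length:
  assumes "\<forall>x\<in>set xs. length (f x) = L" "0 < L" "m + L \<le> length xs * L"
  shows "(\<exists>a<length xs. take L (drop m (concat (map f xs))) = f (xs ! a)) \<or>
    (\<exists>a \<delta>. Suc a < length xs \<and> 0 < \<delta> \<and> \<delta> < L \<and>
       take L (drop m (concat (map f xs))) = drop \<delta> (f (xs ! a)) @ take \<delta> (f (xs ! Suc a)))"
  using assms
proof (induction xs arbitrary: m)
  case Nil
  then show ?case by simp
next
  case (Cons x xs)
  have len_x: "length (f x) = L" using Cons.prems(1) by simp
  consider "L \<le> m" | "m = 0" | "0 < m" "m < L" by linarith
  then show ?case
  proof cases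
    case 1
    then have "take L (drop m (concat (map f (x # xs)))) = take L (drop (m - L) (concat (map f xs)))"
      using len_x by simp
    moreover have "m - L + L \<le> length xs * L" using 1 Cons.prems(3) by simp
    ultimately show ?thesis using Cons.IH[of "m - L"] Cons.prems(1,2) by fastforce
  next
    case 2
    then show ?thesis using len_x by (intro disjI1 exI[of _ 0]) simp
  next
    case 3
    then obtain y ys where xs: "xs = y # ys" using Cons.prems(3) by (cases xs) auto
    have "length (f y) = L" using Cons.prems(1) xs by simp
    then have "take L (drop m (concat (map f (x # xs)))) = drop m (f x) @ take m (f y)"
      using 3 len_x xs by simp
    then show ?thesis using 3 xs by (intro disjI2 exI[of _ 0] exI[of _ m]) simp
  qed
qed

lemma close_substring_concat_equal_length:
  assumes "\<forall>x\<in>set xs. length (f x) = length s" "0 < length s"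
    and "close_substring d s (concat (map f xs))"
  obtains a where "a < length xs" "hamming (f (xs ! a)) s \<le> d"
  | a \<delta> where "Suc a < length xs" "0 < \<delta>" "\<delta> < length s"
      "hamming (drop \<delta> (f (xs ! a)) @ take \<delta> (f (xs ! Suc a))) s \<le> d"
proof -
  obtain u w v where uwv: "concat (map f xs) = u @ w @ v" "length w = length s" "hamming w s \<le> d"
    using assms(3) by (auto simp: close_substring_def)
  have "length (concat (map f xs)) = length xs * length s"
    using assms(1) by (induction xs) auto
  then have "length u + length s \<le> length xs * length s" using uwv(1,2) by simp
  moreover have "w = take (length s) (drop (length u) (concat (map f xs)))" using uwv(1,2) by simp
  ultimately show thesis
    using take_drop_concat_equal_length[OF assms(1,2)] uwv(3) that by metis
qed

lemma nth_drop_append_take: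
  assumes "length u = L" "length v = L" "\<delta> \<le> L" "p < L"
  shows "(drop \<delta> u @ take \<delta> v) ! p = (if p < L - \<delta> then u ! (\<delta> + p) else v ! (p - (L - \<delta>)))"
  using assms by (simp add: nth_append)

section \<open>Misaligned windows\<close>

lemma card_residue_interval_le_one:
  fixes a P c :: nat
  shows "card {p. a \<le> p \<and> p < a + P \<and> p mod P = c} \<le> 1"
proof -
  let ?S = "{p. a \<le> p \<and> p < a + P \<and> p mod P = c}"
  have le_imp_eq: "p1 = p2" if "p1 \<in> ?S" "p2 \<in> ?S" "p1 \<le> p2" for p1 p2
  proof -
    have dvd: "P dvd p2 - p1" using that mod_eq_dvd_iff_nat[of p1 p2 P] by simp
    have "\<not> 0 < p2 - p1"
    proof
      assume "0 < p2 - p1"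
      with dvd have "P \<le> p2 - p1" by (rule dvd_imp_le)
      with that show False by auto
    qed
    then show ?thesis using that(3) by simp
  qed
  have "\<forall>p1\<in>?S. \<forall>p2\<in>?S. p1 = p2"
  proof (intro ballI)
    fix p1 p2 assume "p1 \<in> ?S" "p2 \<in> ?S"
    then show "p1 = p2"
      using le_imp_eq[of p1 p2] le_imp_eq[of p2 p1] by (cases "p1 \<le> p2") simp_all
  qed
  moreover have "finite ?S" by (rule finite_subset[of _ "{..<a + P}"]) auto
  ultimately show ?thesis using card_le_Suc0_iff_eq[of ?S] by simp
qed

lemma card_shifted_marks_mismatches:
  fixes P K e :: nat
  assumes "0 < e" "e < P"
  shows "2 * K - 1 \<le> card {p. p + e < P * K \<and> (p mod P = P - 1) \<noteq> ((p + e) mod P = P - 1)}"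
    (is "_ \<le> card ?M")
proof -
  define S1 where "S1 = (\<lambda>q. q * P + (P - 1 - e)) ` {..<K}"
  define S2 where "S2 = (\<lambda>q. q * P + (P - 1)) ` {..<K - 1}"
  have less_PK: "q * P + c < P * K" if "q < K" "c < P" for q c
  proof -
    have "q * P + c < (q + 1) * P" using that by simp
    also have "\<dots> \<le> K * P" using that by (intro mult_le_mono1) simp
    finally show ?thesis by (simp add: mult.commute)
  qed
  have mod_P: "(q * P + c) mod P = c" if "c < P" for q c
    using that by simp
  have S1: "S1 \<subseteq> {p \<in> ?M. p mod P \<noteq> P - 1}"
  proof
    fix p assume "p \<in> S1"
    then obtain q where q: "q < K" and p: "p = q * P + (P - 1 - e)" by (auto simp: S1_def)
    have "p + e = q * P + (P - 1)" using p assms by simp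
    moreover have "p mod P = P - 1 - e" unfolding p using assms by (intro mod_P) simp
    ultimately show "p \<in> {p \<in> ?M. p mod P \<noteq> P - 1}"
      using assms less_PK[OF q, of "P - 1"] mod_P[of "P - 1" q] by simp
  qed
  have S2: "S2 \<subseteq> {p \<in> ?M. p mod P = P - 1}"
  proof
    fix p assume "p \<in> S2"
    then obtain q where "q < K - 1" and p: "p = q * P + (P - 1)" by (auto simp: S2_def)
    then have q: "q + 1 < K" by simp
    have pe: "p + e = (q + 1) * P + (e - 1)" using p assms by simp
    moreover have "p mod P = P - 1" unfolding p using assms by (intro mod_P) simp
    moreover have "(p + e) mod P = e - 1" unfolding pe using assms by (intro mod_P) simp
    ultimately show "p \<in> {p \<in> ?M. p mod P = P - 1}" using assms less_PK[OF q, of "e - 1"] by simp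
  qed
  have "inj_on (\<lambda>q. q * P + c) A" for c A using assms by (auto simp: inj_on_def)
  then have "card S1 = K" "card S2 = K - 1"
    unfolding S1_def S2_def by (simp_all only: card_image) simp_all
  moreover have "S1 \<inter> S2 = {}" using S1 S2 by blast
  ultimately have "card (S1 \<union> S2) = K + (K - 1)"
    by (simp add: card_Un_disjoint S1_def S2_def)
  moreover have "finite ?M" by (rule finite_subset[of _ "{..<P * K}"]) auto
  then have "card (S1 \<union> S2) \<le> card ?M" using S1 S2 by (intro card_mono) auto
  ultimately show ?thesis by linarith
qed

text \<open>\<open>T\<close> plays the front tag, \<open>T @ R1\<close> and \<open>T @ R2\<close> two consecutive blocks of a choice
  string, and \<open>window\<close> is the substring of length \<open>L\<close> starting at offset \<open>\<delta>\<close> of the first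
  block. Against the template, the front tag meets a shift of itself when \<open>\<delta>\<close> or \<open>L - \<delta>\<close> is
  small; otherwise either the next front tag lies over the zeros at the end of the template,
  or the ones of the template lie over the sparse remainder \<open>R1\<close>.\<close>
context
  fixes K k N b F L :: nat and T R1 R2 :: "bool list" and \<delta> :: nat
  assumes sizes: "2 * k \<le> K" "2 \<le> k" "3 \<le> N" and b: "b = K - 2 * k + 2"
    and F: "F = (3 * K + 1) * K" and L: "L = F + K + N * b"
    and T: "length T = F" "\<And>p. p < F \<Longrightarrow> T ! p \<longleftrightarrow> p mod (3 * K + 1) \<noteq> 3 * K"
    and R: "length R1 = K + N * b" "length R2 = K + N * b"
    and ones_R1: "count_list R1 True \<le> b + 2"
    and \<delta>: "0 < \<delta>" "\<delta> < L"
begin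

abbreviation window :: "bool list" where
  "window \<equiv> drop \<delta> (T @ R1) @ take \<delta> (T @ R2)"

abbreviation template_like :: "bool list" where
  "template_like \<equiv> T @ replicate K True @ replicate (N * b) False"

lemma window_nth:
  "p < L \<Longrightarrow> window ! p = (if p < L - \<delta> then (T @ R1) ! (\<delta> + p) else (T @ R2) ! (p - (L - \<delta>)))"
  by (rule nth_drop_append_take) (use T(1) R L \<delta> in auto)

lemma template_like_nth: "p < L \<Longrightarrow> template_like ! p \<longleftrightarrow> (if p < F then T ! p else p < F + K)"
  using T(1) L by (auto simp: nth_append)

lemma mismatches_window_eq:
  "mismatches window template_like = {p. p < L \<and> window ! p \<noteq> template_like ! p}"
  using T(1) R \<delta> L by (auto simp: mismatches_def)

lemma hamming_window_gt_card:
  assumes "A \<subseteq> mismatches window template_like" "2 * (K - k) < card A"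
  shows "2 * (K - k) < hamming window template_like"
  using card_mono[OF finite_mismatches assms(1)] assms(2)
  by (simp add: hamming_eq_card_mismatches)

lemma hamming_window_small_offset:
  assumes "\<delta> \<le> 3 * K"
  shows "2 * (K - k) < hamming window template_like"
proof (rule hamming_window_gt_card)
  let ?A = "{p. p + \<delta> < (3 * K + 1) * K \<and>
    (p mod (3 * K + 1) = 3 * K) \<noteq> ((p + \<delta>) mod (3 * K + 1) = 3 * K)}"
  show "?A \<subseteq> mismatches window template_like"
  proof
    fix p assume "p \<in> ?A"
    then have p: "p + \<delta> < F" "(p mod (3 * K + 1) = 3 * K) \<noteq> ((p + \<delta>) mod (3 * K + 1) = 3 * K)"
      using F by auto
    then have "window ! p = T ! (\<delta> + p)" "template_like ! p = T ! p"
      using window_nth[of p] template_like_nth[of p] L T(1) by (auto simp: nth_append)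
    then show "p \<in> mismatches window template_like"
      unfolding mismatches_window_eq using p T(2)[of p] T(2)[of "\<delta> + p"] L
      by (auto simp: add.commute)
  qed
  show "2 * (K - k) < card ?A"
    using card_shifted_marks_mismatches[of \<delta> "3 * K + 1" K] assms \<delta> sizes by simp
qed

lemma hamming_window_large_offset:
  assumes "L - \<delta> \<le> 3 * K"
  shows "2 * (K - k) < hamming window template_like"
proof (rule hamming_window_gt_card)
  let ?e = "L - \<delta>"
  let ?A = "{p. p + ?e < (3 * K + 1) * K \<and>
    (p mod (3 * K + 1) = 3 * K) \<noteq> ((p + ?e) mod (3 * K + 1) = 3 * K)}"
  show "(+) ?e ` ?A \<subseteq> mismatches window template_like"
  proof
    fix p' assume "p' \<in> (+) ?e ` ?A"
    then obtain p where p': "p' = ?e + p" and p: "p + ?e < F"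
      "(p mod (3 * K + 1) = 3 * K) \<noteq> ((p + ?e) mod (3 * K + 1) = 3 * K)"
      using F by auto
    then have "window ! p' = T ! p" "template_like ! p' = T ! (?e + p)"
      using window_nth[of p'] template_like_nth[of p'] L T(1) by (auto simp: nth_append)
    then show "p' \<in> mismatches window template_like"
      unfolding mismatches_window_eq using p p' T(2)[of p] T(2)[of "?e + p"] L
      by (auto simp: add.commute)
  qed
  have "2 * K - 1 \<le> card ?A"
    using card_shifted_marks_mismatches[of ?e "3 * K + 1" K] assms \<delta> by simp
  then show "2 * (K - k) < card ((+) ?e ` ?A)"
    using sizes by (simp add: card_image)
qed

lemma hamming_window_next_front_tag:
  assumes "3 * K < \<delta>" "\<delta> \<le> N * b"
  shows "2 * (K - k) < hamming window template_like"
proof (rule hamming_window_gt_card)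
  let ?A = "{L - \<delta>..<L - \<delta> + 3 * K}"
  show "?A \<subseteq> mismatches window template_like"
  proof
    fix p assume "p \<in> ?A"
    then have p: "L - \<delta> \<le> p" "p - (L - \<delta>) < 3 * K" "p < L" using assms \<delta> by auto
    have "3 * K \<le> F" using F sizes by simp
    then have "window ! p = T ! (p - (L - \<delta>))"
      using window_nth[of p] p T(1) by (auto simp: nth_append)
    moreover have "T ! (p - (L - \<delta>))" using T(2) p \<open>3 * K \<le> F\<close> by simp
    moreover have "F + K \<le> p" using p assms L by linarith
    then have "\<not> template_like ! p" using template_like_nth[of p] p by simp
    ultimately show "p \<in> mismatches window template_like"
      unfolding mismatches_window_eq using p by simp
  qed
  show "2 * (K - k) < card ?A" using sizes by simp
qed

lemma card_window_ones_in_block_tail: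
  assumes "F \<le> \<delta> + a"
  shows "card {p. a \<le> p \<and> p < L - \<delta> \<and> window ! p} \<le> b + 2"
proof -
  let ?Os = "{p. a \<le> p \<and> p < L - \<delta> \<and> window ! p}"
  have window_R1: "window ! p = R1 ! (\<delta> + p - F)" "F \<le> \<delta> + p" "\<delta> + p - F < length R1"
    if "a \<le> p" "p < L - \<delta>" for p
    using that window_nth[of p] assms L T(1) R(1) by (auto simp: nth_append)
  have "(\<lambda>p. \<delta> + p - F) ` ?Os \<subseteq> {q. q < length R1 \<and> R1 ! q}"
    using window_R1 by auto
  moreover have "inj_on (\<lambda>p. \<delta> + p - F) ?Os"
  proof (rule inj_onI)
    fix x y assume "x \<in> ?Os" "y \<in> ?Os" "\<delta> + x - F = \<delta> + y - F"
    then show "x = y" using window_R1(2)[of x] window_R1(2)[of y] by simp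
  qed
  ultimately have "card ?Os \<le> card {q. q < length R1 \<and> R1 ! q}"
    by (intro card_inj_on_le) simp_all
  then show ?thesis using ones_R1 by (simp add: count_list_True_eq_card)
qed

lemma card_template_like_zeros_le_one:
  assumes "c \<le> F + K" "c \<le> a + (3 * K + 1)"
  shows "card {p. a \<le> p \<and> p < c \<and> \<not> template_like ! p} \<le> 1"
proof -
  let ?S = "{p. a \<le> p \<and> p < a + (3 * K + 1) \<and> p mod (3 * K + 1) = 3 * K}"
  have "{p. a \<le> p \<and> p < c \<and> \<not> template_like ! p} \<subseteq> ?S"
    using template_like_nth T(2) assms L by (auto split: if_splits)
  moreover have "finite ?S" by (rule finite_subset[of _ "{..<a + (3 * K + 1)}"]) auto
  ultimately show ?thesis
    using card_mono card_residue_interval_le_one[of a "3 * K + 1" "3 * K"] by (blast intro: le_trans)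
qed

lemma hamming_window_block_tail:
  assumes "N * b < \<delta>" "3 * K < L - \<delta>"
  shows "2 * (K - k) < hamming window template_like"
proof (rule hamming_window_gt_card)
  define m where "m = min (3 * K) (K + N * b)"
  define I where "I = {L - \<delta> - m..<L - \<delta>}"
  define Os where "Os = {p. L - \<delta> - m \<le> p \<and> p < L - \<delta> \<and> window ! p}"
  define Z where "Z = {p. L - \<delta> - m \<le> p \<and> p < L - \<delta> \<and> \<not> template_like ! p}"
  have m: "m \<le> L - \<delta>" "m \<le> 3 * K" "m \<le> K + N * b" using assms by (auto simp: m_def)
  show "I - (Os \<union> Z) \<subseteq> mismatches window template_like"
    unfolding mismatches_window_eq by (auto simp: I_def Os_def Z_def)
  have "card Os \<le> b + 2"
    unfolding Os_def using m L by (intro card_window_ones_in_block_tail) linarith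
  moreover have "card Z \<le> 1"
    unfolding Z_def using m assms L by (intro card_template_like_zeros_le_one) linarith+
  moreover have "card I - card (Os \<union> Z) \<le> card (I - (Os \<union> Z))"
    by (rule diff_card_le_card_Diff) (simp add: Os_def Z_def)
  moreover have "card I = m" using m by (simp add: I_def)
  ultimately have "m - (b + 3) \<le> card (I - (Os \<union> Z))"
    using card_Un_le[of Os Z] by linarith
  moreover have "2 * (K - k) < m - (b + 3)"
  proof (cases "3 * K \<le> K + N * b")
    case True
    then show ?thesis using sizes b by (simp add: m_def)
  next
    case False
    have "3 * b \<le> N * b" using sizes by simp
    then show ?thesis using False sizes b by (simp add: m_def)
  qed
  ultimately show "2 * (K - k) < card (I - (Os \<union> Z))" by linarith
qed

lemma hamming_misaligned_window: "2 * (K - k) < hamming window template_like"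
proof -
  consider "\<delta> \<le> 3 * K" | "L - \<delta> \<le> 3 * K" | "3 * K < \<delta>" "\<delta> \<le> N * b"
    | "N * b < \<delta>" "3 * K < L - \<delta>"
    by linarith
  then show ?thesis
    using hamming_window_small_offset hamming_window_large_offset
      hamming_window_next_front_tag hamming_window_block_tail
    by cases auto
qed

end

section \<open>The strings of the construction\<close>

lemma nth_concat_replicate:
  "p < m * length x \<Longrightarrow> concat (replicate m x) ! p = x ! (p mod length x)"
proof (induction m arbitrary: p)
  case (Suc m)
  then show ?case
    by (cases "p < length x") (auto simp: nth_append le_mod_geq)
qed simp

lemma concat_replicate_replicate: "concat (replicate a (replicate c x)) = replicate (a * c) x"
  by (induction a) (auto simp: replicate_add)

lemma replicate_run_eq_map:
  "replicate a False @ replicate c True @ replicate d False = map (\<lambda>q. a \<le> q \<and> q < a + c) [0..<a + c + d]"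
  by (rule nth_equalityI) (auto simp: nth_append)

lemma replicate_two_ones_eq_map:
  "replicate a False @ [True] @ replicate c False @ [True] @ replicate d False =
   map (\<lambda>q. q = a \<or> q = a + c + 1) [0..<a + c + d + 2]"
  by (rule nth_equalityI) (auto simp: nth_append nth_Cons')

lemma length_front_tag: "length (front_tag n k) = (3 * (n * k) + 1) * (n * k)"
  by (simp add: front_tag_def length_concat sum_list_replicate ones_def algebra_simps)

lemma front_tag_nth:
  assumes "p < length (front_tag n k)"
  shows "front_tag n k ! p \<longleftrightarrow> p mod (3 * (n * k) + 1) \<noteq> 3 * (n * k)"
proof -
  have "p < (n * k) * length (replicate (3 * (n * k)) True @ [False])"
    using assms by (simp add: length_front_tag algebra_simps)
  then have "front_tag n k ! p = (replicate (3 * (n * k)) True @ [False]) ! (p mod (3 * (n * k) + 1))"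
    unfolding front_tag_def ones_def by (simp add: nth_concat_replicate mult.assoc)
  moreover have "p mod (3 * (n * k) + 1) < 3 * (n * k) \<or> p mod (3 * (n * k) + 1) = 3 * (n * k)"
    using mod_less_divisor[of "3 * (n * k) + 1" p] by linarith
  ultimately show ?thesis by (auto simp: nth_append)
qed

lemma LL_eq: "LL n k = length (front_tag n k) + n * k + NN k * bb n k"
  by (simp add: LL_def length_front_tag algebra_simps)

lemma length_template: "length (template n k) = LL n k"
  by (simp add: template_def LL_eq ones_def zeros_def)

lemma number_eq_map: "1 \<le> x \<Longrightarrow> x \<le> n \<Longrightarrow> number n x = map (\<lambda>q. q = x - 1) [0..<n]"
  using replicate_run_eq_map[of "x - 1" 1 "n - x"] by (auto simp: number_def zeros_def)

lemma encode_eq_map: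
  assumes "1 \<le> i" "i < j" "j \<le> k" "1 \<le> r" "r \<le> n" "1 \<le> s" "s \<le> n"
  shows "encode n k i j (r, s) =
    map (\<lambda>q. q = (i - 1) * n + (r - 1) \<or> q = (j - 1) * n + (s - 1)) [0..<n * k]"
proof -
  have "j - 1 = (i - 1) + 1 + (j - i - 1)" "k = (i - 1) + 1 + (j - i - 1) + 1 + (k - j)"
    using assms by linarith+
  then have j: "(j - 1) * n = (i - 1) * n + n + (j - i - 1) * n"
    and k: "n * k = (i - 1) * n + n + (j - i - 1) * n + n + (k - j) * n"
    by (metis add_mult_distrib mult_1, metis add_mult_distrib mult_1 mult.commute)
  let ?a = "(i - 1) * n + (r - 1)" and ?c = "(n - r) + (j - i - 1) * n + (s - 1)"
    and ?d = "(n - s) + (k - j) * n"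
  have "encode n k i j (r, s) =
    replicate ?a False @ [True] @ replicate ?c False @ [True] @ replicate ?d False"
    unfolding encode_def number_def zeros_def concat_replicate_replicate replicate_add by simp
  also have "\<dots> = map (\<lambda>q. q = ?a \<or> q = ?a + ?c + 1) [0..<?a + ?c + ?d + 2]"
    by (rule replicate_two_ones_eq_map)
  also have "?a + ?c + 1 = (j - 1) * n + (s - 1)" using j assms by linarith
  also have "?a + ?c + ?d + 2 = n * k" using k assms by linarith
  finally show ?thesis .
qed

lemma card_increasing_pairs: "card {(a, b). 1 \<le> a \<and> a < b \<and> b \<le> k} = k choose 2"
proof (induction k)
  case 0
  have "{(a, b). 1 \<le> a \<and> a < b \<and> b \<le> (0::nat)} = {}" by auto
  then show ?case by (simp only:) simp
next
  case (Suc k)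
  have split: "{(a, b). 1 \<le> a \<and> a < b \<and> b \<le> Suc k} =
    {(a, b). 1 \<le> a \<and> a < b \<and> b \<le> k} \<union> (\<lambda>a. (a, Suc k)) ` {1..k}"
    by (auto simp: le_Suc_eq)
  have "finite {(a, b). 1 \<le> a \<and> a < b \<and> b \<le> k}"
    by (rule finite_subset[of _ "{1..k} \<times> {1..k}"]) auto
  then have "card {(a, b). 1 \<le> a \<and> a < b \<and> b \<le> Suc k} = (k choose 2) + k"
    unfolding split using Suc.IH by (subst card_Un_disjoint) (auto simp: card_image inj_on_def)
  then show ?case by (simp add: numeral_2_eq_2)
qed

lemma pair_index_le_NN:
  assumes "1 \<le> i" "i < j" "j \<le> k"
  shows "pair_index k i j \<le> NN k"
proof -
  let ?P = "{(a, b). 1 \<le> a \<and> a < b \<and> b \<le> k}"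
  have fin: "finite ?P" by (rule finite_subset[of _ "{1..k} \<times> {1..k}"]) auto
  have "{(a, b). 1 \<le> a \<and> a < b \<and> b \<le> k \<and> (a < i \<or> (a = i \<and> b < j))} \<subseteq> ?P - {(i, j)}"
    by auto
  then have "pair_index k i j \<le> card (?P - {(i, j)}) + 1"
    unfolding pair_index_def using fin by (simp add: card_mono)
  also have "\<dots> = card ?P" using assms fin card_Suc_Diff1[of ?P "(i, j)"] by simp
  finally show ?thesis using card_increasing_pairs[of k] by (simp add: NN_def)
qed

lemma pair_index_1_2: "pair_index k 1 2 = 1"
  unfolding pair_index_def by (simp add: card_eq_0_iff)

lemma pair_index_1_3: "3 \<le> k \<Longrightarrow> pair_index k 1 3 = 2"
proof -
  assume "3 \<le> k"
  then have "{(a, b). 1 \<le> a \<and> a < b \<and> b \<le> k \<and> (a < 1 \<or> (a = 1 \<and> b < 3))} = {(1::nat, 2::nat)}"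
    by auto
  then show ?thesis by (simp add: pair_index_def)
qed

lemma three_le_NN: "3 \<le> k \<Longrightarrow> 3 \<le> NN k"
proof -
  assume "3 \<le> k"
  then have "3 * 2 \<le> k * (k - 1)" by (intro mult_le_mono) auto
  then show ?thesis by (simp add: NN_def choose_two)
qed

lemma back_tag_eq_map:
  assumes "1 \<le> i'" "i' \<le> NN k"
  shows "back_tag n k i' = map (\<lambda>q. (i' - 1) * bb n k \<le> q \<and> q < i' * bb n k) [0..<NN k * bb n k]"
proof -
  have "(i' - 1) * bb n k + bb n k = i' * bb n k"
    using assms by (cases i') auto
  moreover have "i' * bb n k + (NN k - i') * bb n k = NN k * bb n k"
    using assms by (simp add: add_mult_distrib[symmetric])
  ultimately show ?thesis
    using replicate_run_eq_map[of "(i' - 1) * bb n k" "bb n k" "(NN k - i') * bb n k"]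
    by (simp add: back_tag_def zeros_def ones_def)
qed

context
  fixes n k i j r s :: nat
  assumes pair: "1 \<le> i" "i < j" "j \<le> k" and vertices: "1 \<le> r" "r \<le> n" "1 \<le> s" "s \<le> n"
begin

lemma encode_positions_less:
  "(i - 1) * n + (r - 1) < (j - 1) * n + (s - 1)" "(j - 1) * n + (s - 1) < n * k"
proof -
  have "(i - 1) * n + (r - 1) < (i - 1) * n + n" using vertices by simp
  also have "\<dots> = i * n" using pair by (cases i) auto
  also have "\<dots> \<le> (j - 1) * n" using pair by (intro mult_le_mono1) linarith
  finally show "(i - 1) * n + (r - 1) < (j - 1) * n + (s - 1)" by simp
  have "(j - 1) * n + (s - 1) < (j - 1) * n + n" using vertices by simp
  also have "\<dots> = j * n" using pair by (cases j) auto
  also have "\<dots> \<le> k * n" using pair by (intro mult_le_mono1) linarith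
  finally show "(j - 1) * n + (s - 1) < n * k" by (simp add: mult.commute)
qed

lemma block_eq:
  "block n k i j (r, s) = front_tag n k @
     map (\<lambda>q. q = (i - 1) * n + (r - 1) \<or> q = (j - 1) * n + (s - 1)) [0..<n * k] @
     map (\<lambda>q. (pair_index k i j - 1) * bb n k \<le> q \<and> q < pair_index k i j * bb n k) [0..<NN k * bb n k]"
  using pair vertices pair_index_le_NN[OF pair]
  by (simp add: block_def encode_eq_map back_tag_eq_map pair_index_def)

lemma length_block: "length (block n k i j (r, s)) = LL n k"
  by (simp add: block_eq LL_eq)

lemma length_block_tail:
  "length (encode n k i j (r, s) @ back_tag n k (pair_index k i j)) = n * k + NN k * bb n k"
  using length_block by (simp add: block_def LL_eq)

lemma mismatches_block_template:
  "mismatches (block n k i j (r, s)) (template n k) =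
     (+) (length (front_tag n k)) `
       (({..<n * k} - {(i - 1) * n + (r - 1), (j - 1) * n + (s - 1)}) \<union>
        (+) (n * k) ` {(pair_index k i j - 1) * bb n k..<pair_index k i j * bb n k})"
proof -
  let ?A1 = "(i - 1) * n + (r - 1)" and ?A2 = "(j - 1) * n + (s - 1)" and ?i' = "pair_index k i j"
  have "template n k =
      front_tag n k @ map (\<lambda>_. True) [0..<n * k] @ map (\<lambda>_. False) [0..<NN k * bb n k]"
    by (simp add: template_def ones_def zeros_def map_replicate_const)
  moreover have "mismatches (map (\<lambda>q. q = ?A1 \<or> q = ?A2) [0..<n * k]) (map (\<lambda>_. True) [0..<n * k]) =
      {..<n * k} - {?A1, ?A2}"
    by (auto simp: mismatches_map_upt)
  moreover have le: "?i' * bb n k \<le> NN k * bb n k"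
    using pair_index_le_NN[OF pair] by simp
  have "mismatches (map (\<lambda>q. (?i' - 1) * bb n k \<le> q \<and> q < ?i' * bb n k) [0..<NN k * bb n k])
      (map (\<lambda>_. False) [0..<NN k * bb n k]) = {(?i' - 1) * bb n k..<?i' * bb n k}"
    unfolding mismatches_map_upt using order.strict_trans2[OF _ le] by auto
  ultimately show ?thesis
    unfolding block_eq by (simp add: mismatches_append image_Un)
qed

lemma hamming_block_template:
  assumes "2 \<le> n"
  shows "hamming (block n k i j (r, s)) (template n k) = 2 * dd n k"
proof -
  let ?A1 = "(i - 1) * n + (r - 1)" and ?A2 = "(j - 1) * n + (s - 1)" and ?i' = "pair_index k i j"
  let ?E = "{..<n * k} - {?A1, ?A2}" and ?B = "(+) (n * k) ` {(?i' - 1) * bb n k..<?i' * bb n k}"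
  have "card ?E = n * k - 2"
    using encode_positions_less by (subst card_Diff_subset) auto
  moreover have "card ?B = bb n k"
    by (simp add: card_image pair_index_def diff_mult_distrib)
  moreover have "?E \<inter> ?B = {}" by auto
  ultimately have "card (?E \<union> ?B) = n * k - 2 + bb n k"
    by (simp add: card_Un_disjoint)
  then have "hamming (block n k i j (r, s)) (template n k) = n * k - 2 + bb n k"
    by (simp add: hamming_eq_card_mismatches mismatches_block_template card_image)
  moreover have "2 * k \<le> n * k" using assms by simp
  ultimately show ?thesis using pair unfolding bb_def dd_def by linarith
qed

lemma count_list_block_tail:
  "count_list (encode n k i j (r, s) @ back_tag n k (pair_index k i j)) True \<le> bb n k + 2"
proof -
  let ?A1 = "(i - 1) * n + (r - 1)" and ?A2 = "(j - 1) * n + (s - 1)" and ?i' = "pair_index k i j"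
  have "card {q. q < n * k \<and> (q = ?A1 \<or> q = ?A2)} \<le> card {?A1, ?A2}"
    by (rule card_mono) auto
  also have "\<dots> \<le> 2" by (simp add: card_insert_if)
  finally have "card {q. q < n * k \<and> (q = ?A1 \<or> q = ?A2)} \<le> 2" .
  moreover have "card {q. q < NN k * bb n k \<and> (?i' - 1) * bb n k \<le> q \<and> q < ?i' * bb n k} \<le>
      card {(?i' - 1) * bb n k..<?i' * bb n k}"
    by (rule card_mono) auto
  moreover have "card {(?i' - 1) * bb n k..<?i' * bb n k} = bb n k"
    by (simp add: pair_index_def diff_mult_distrib)
  ultimately show ?thesis
    using pair vertices pair_index_le_NN[OF pair]
    by (simp add: encode_eq_map back_tag_eq_map count_list_map_upt_True pair_index_def)
qed

end

lemma hamming_misaligned_blocks: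
  assumes "2 \<le> n" "3 \<le> k" and pair: "1 \<le> i" "i < j" "j \<le> k"
    and "1 \<le> r1" "r1 \<le> n" "1 \<le> s1" "s1 \<le> n" "1 \<le> r2" "r2 \<le> n" "1 \<le> s2" "s2 \<le> n"
    and "0 < \<delta>" "\<delta> < LL n k"
  shows "2 * dd n k <
    hamming (drop \<delta> (block n k i j (r1, s1)) @ take \<delta> (block n k i j (r2, s2))) (template n k)"
proof -
  have "2 * (n * k - k) < hamming
      (drop \<delta> (front_tag n k @ encode n k i j (r1, s1) @ back_tag n k (pair_index k i j)) @
       take \<delta> (front_tag n k @ encode n k i j (r2, s2) @ back_tag n k (pair_index k i j)))
      (front_tag n k @ replicate (n * k) True @ replicate (NN k * bb n k) False)"
  proof (rule hamming_misaligned_window[where F = "length (front_tag n k)" and L = "LL n k"])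
    show "2 * k \<le> n * k" using assms by simp
    show "3 \<le> NN k" using three_le_NN assms by simp
  qed (use assms length_block_tail[OF pair] count_list_block_tail[OF pair] front_tag_nth
      in \<open>simp_all add: bb_def LL_eq length_front_tag\<close>)
  then show ?thesis by (simp add: block_def template_def ones_def zeros_def dd_def)
qed

section \<open>Solutions\<close>

lemma section_member_unique:
  fixes Y :: "nat set"
  assumes "Y \<subseteq> {..<k * n}" "card Y = k" "\<forall>p<k. \<exists>x<n. p * n + x \<in> Y"
    and "p * n + x \<in> Y" "p * n + y \<in> Y" "x < n" "y < n"
  shows "x = y"
proof -
  have "(\<lambda>q. q div n) ` Y = {..<k}"
  proof
    show "(\<lambda>q. q div n) ` Y \<subseteq> {..<k}"
      using assms(1) by (auto intro: less_mult_imp_div_less)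
    show "{..<k} \<subseteq> (\<lambda>q. q div n) ` Y"
    proof
      fix p assume "p \<in> {..<k}"
      then obtain x where "x < n" "p * n + x \<in> Y" using assms(3) by auto
      then show "p \<in> (\<lambda>q. q div n) ` Y" by (intro image_eqI[of _ _ "p * n + x"]) simp_all
    qed
  qed
  then have "inj_on (\<lambda>q. q div n) Y"
    using assms(1,2) by (intro eq_card_imp_inj_on) (auto intro: finite_subset)
  moreover have "(p * n + x) div n = (p * n + y) div n" using assms(6,7) by simp
  ultimately show ?thesis using assms(4,5) by (auto dest: inj_onD)
qed

lemma section_index_less:
  fixes p k x n :: nat
  assumes "1 \<le> p" "p \<le> k" "x < n"
  shows "(p - 1) * n + x < k * n"
proof -
  have "(p - 1) * n + x < (p - 1) * n + n" using assms(3) by simp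
  also have "\<dots> = p * n" using assms(1) by (cases p) auto
  also have "\<dots> \<le> k * n" using assms(2) by simp
  finally show ?thesis .
qed

lemma enc_section_eq_number:
  assumes "p * n \<le> length xs" "1 \<le> p" "1 \<le> x" "x \<le> n"
    and "\<And>y. y < n \<Longrightarrow> xs ! ((p - 1) * n + y) \<longleftrightarrow> y = x - 1"
  shows "enc_section n p xs = number n x"
proof -
  have len: "(p - 1) * n + n \<le> length xs" using assms(1,2) by (cases p) auto
  show ?thesis
  proof (rule nth_equalityI)
    show "length (enc_section n p xs) = length (number n x)"
      using len assms(3,4) by (simp add: enc_section_def number_eq_map)
    fix y assume "y < length (enc_section n p xs)"
    then have "y < n" by (simp add: enc_section_def)
    then show "enc_section n p xs ! y = number n x ! y"
      using assms(3-5) len by (simp add: enc_section_def number_eq_map nth_drop)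
  qed
qed

context
  fixes n k :: nat and es :: "(nat \<times> nat) list" and s :: "bool list"
  assumes graph: "simple_graph n es" and k: "3 \<le> k" and solution: "is_solution n k es s"
begin

lemma edge_bounds: "(r, t) \<in> set es \<Longrightarrow> 1 \<le> r \<and> r < t \<and> t \<le> n"
  using graph by (auto simp: simple_graph_def)

lemma edge_vertices_bounded:
  assumes "(r, t) \<in> set es"
  shows "1 \<le> r" "r \<le> n" "1 \<le> t" "t \<le> n"
  using edge_bounds[OF assms] by auto

lemma length_solution: "length s = LL n k"
  using solution by (simp add: is_solution_def)

lemma hamming_solution_template_le: "hamming s (template n k) \<le> dd n k"
proof -
  obtain u w v where "template n k = u @ w @ v" "length w = length s" "hamming w s \<le> dd n k"
    using solution by (auto simp: is_solution_def close_substring_def)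
  then have "w = template n k" using length_solution length_template[of n k] by simp
  then show ?thesis
    using \<open>hamming w s \<le> dd n k\<close> by (simp add: hamming_eq_card_mismatches mismatches_commute)
qed

lemma two_le_n: "2 \<le> n"
proof -
  have "close_substring (dd n k) s (choice_string n k es 1 2)"
    using solution k by (simp add: is_solution_def)
  moreover have "0 < LL n k" using three_le_NN[OF k] by (simp add: LL_def bb_def)
  ultimately have "es \<noteq> []"
    using length_solution by (auto simp: close_substring_def choice_string_def)
  then obtain r t where "(r, t) \<in> set es" by (cases es) auto
  then show ?thesis using edge_bounds by fastforce
qed

lemma edge_with_close_block:
  assumes pair: "1 \<le> i" "i < j" "j \<le> k"
  obtains r t where "(r, t) \<in> set es" "hamming (block n k i j (r, t)) s \<le> dd n k"
proof -
  have lengths: "\<forall>e\<in>set es. length (block n k i j e) = length s"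
  proof
    fix e assume e: "e \<in> set es"
    obtain r t where "e = (r, t)" by (cases e)
    then show "length (block n k i j e) = length s"
      using length_block[OF pair edge_vertices_bounded] e length_solution by simp
  qed
  have pos: "0 < length s" using length_solution three_le_NN[OF k] by (simp add: LL_def bb_def)
  have "close_substring (dd n k) s (concat (map (block n k i j) es))"
    using solution pair by (simp add: is_solution_def choice_string_def)
  then show thesis
  proof (rule close_substring_concat_equal_length[OF lengths pos])
    fix a assume "a < length es" "hamming (block n k i j (es ! a)) s \<le> dd n k"
    then show thesis using that nth_mem[of a es] by (cases "es ! a") auto
  next
    fix a \<delta>
    let ?w = "drop \<delta> (block n k i j (es ! a)) @ take \<delta> (block n k i j (es ! Suc a))"
    assume window: "Suc a < length es" "0 < \<delta>" "\<delta> < length s" "hamming ?w s \<le> dd n k"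
    obtain r1 t1 r2 t2 where e: "es ! a = (r1, t1)" "es ! Suc a = (r2, t2)"
      by (cases "es ! a", cases "es ! Suc a") auto
    then have "(r1, t1) \<in> set es" "(r2, t2) \<in> set es"
      using window nth_mem[of a es] nth_mem[of "Suc a" es] by auto
    then have "2 * dd n k < hamming ?w (template n k)"
      using hamming_misaligned_blocks[OF two_le_n k pair] edge_vertices_bounded window e length_solution
      by simp
    also have "\<dots> \<le> hamming ?w s + hamming s (template n k)"
    proof (rule hamming_triangle)
      show "length ?w = length s" using window lengths by simp
      show "length s = length (template n k)" by (simp add: length_solution length_template)
    qed
    finally show thesis using window hamming_solution_template_le by linarith
  qed
qed

lemma mismatches_solution_subset_block:
  assumes pair: "1 \<le> i" "i < j" "j \<le> k"
  obtains r t where "(r, t) \<in> set es"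
    "mismatches s (template n k) \<subseteq> mismatches (block n k i j (r, t)) (template n k)"
    "hamming s (template n k) = dd n k"
proof -
  obtain r t where e: "(r, t) \<in> set es" and close: "hamming (block n k i j (r, t)) s \<le> dd n k"
    using edge_with_close_block[OF pair] .
  note vertices = edge_vertices_bounded[OF e]
  have "length (block n k i j (r, t)) = length s" "length s = length (template n k)"
    using length_block[OF pair vertices] by (simp_all add: length_solution length_template)
  from hamming_midpoint[OF this hamming_block_template[OF pair vertices two_le_n] close
      hamming_solution_template_le]
  show thesis using that e by blast
qed

lemma hamming_solution_template: "hamming s (template n k) = dd n k"
  using mismatches_solution_subset_block[of 1 2] k by simp

lemma mismatches_solution_subset_encoding:
  "mismatches s (template n k) \<subseteq> (+) (length (front_tag n k)) ` {..<n * k}"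
proof -
  let ?X = "mismatches s (template n k)" and ?F = "length (front_tag n k)" and ?b = "bb n k"
  have in_back_tag: "?X \<subseteq> (+) ?F ` ({..<n * k} \<union> (+) (n * k) ` {(i' - 1) * ?b..<i' * ?b})"
    if j: "1 < j" "j \<le> k" and i': "pair_index k 1 j = i'" for j i'
  proof -
    obtain r t where e: "(r, t) \<in> set es"
      and X: "?X \<subseteq> mismatches (block n k 1 j (r, t)) (template n k)"
      and "hamming s (template n k) = dd n k"
      by (rule mismatches_solution_subset_block[of 1 j]) (use j in simp_all)
    then show ?thesis
      using mismatches_block_template[of 1 j k r n t] edge_vertices_bounded[OF e] j i' by auto
  qed
  have "?X \<subseteq> (+) ?F ` ({..<n * k} \<union> (+) (n * k) ` {0..<?b})"
    using in_back_tag[OF _ _ pair_index_1_2] k by simp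
  moreover have "?X \<subseteq> (+) ?F ` ({..<n * k} \<union> (+) (n * k) ` {?b..<2 * ?b})"
    using in_back_tag[OF _ _ pair_index_1_3[OF k]] k by simp
  ultimately have "?X \<subseteq> (+) ?F ` (({..<n * k} \<union> (+) (n * k) ` {0..<?b}) \<inter>
      ({..<n * k} \<union> (+) (n * k) ` {?b..<2 * ?b}))"
    by (simp add: image_Int)
  also have "({..<n * k} \<union> (+) (n * k) ` {0..<?b}) \<inter> ({..<n * k} \<union> (+) (n * k) ` {?b..<2 * ?b}) =
      {..<n * k}"
    by auto
  finally show ?thesis .
qed

lemma length_encoding_part: "length (encoding_part n k s) = n * k"
  using length_solution by (simp add: encoding_part_def LL_def)

lemma encoding_part_nth:
  assumes "q < n * k"
  shows "encoding_part n k s ! q \<longleftrightarrow> length (front_tag n k) + q \<notin> mismatches s (template n k)"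
proof -
  have "encoding_part n k s ! q = s ! (length (front_tag n k) + q)"
    using assms length_solution by (simp add: encoding_part_def length_front_tag LL_def algebra_simps)
  moreover have "template n k ! (length (front_tag n k) + q)"
    using assms by (simp add: template_def ones_def nth_append)
  moreover have "length (front_tag n k) + q < length s"
    using assms by (simp add: length_solution LL_eq)
  ultimately show ?thesis by (simp add: mismatches_def length_solution length_template)
qed

lemma count_list_encoding_part: "count_list (encoding_part n k s) True = k"
proof -
  let ?X = "mismatches s (template n k)" and ?F = "length (front_tag n k)"
    and ?Y = "{q. q < n * k \<and> encoding_part n k s ! q}"
  have "(+) ?F ` ?Y = (+) ?F ` {..<n * k} - ?X"
    using encoding_part_nth by auto
  moreover have "card ?Y = card ((+) ?F ` ?Y)"
    by (rule card_image[symmetric]) simp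
  ultimately have "card ?Y = card ((+) ?F ` {..<n * k} - ?X)"
    by simp
  also have "\<dots> = n * k - dd n k"
    using mismatches_solution_subset_encoding hamming_solution_template
    by (simp add: card_Diff_subset card_image hamming_eq_card_mismatches)
  finally show ?thesis
    using two_le_n by (simp add: count_list_True_eq_card length_encoding_part dd_def)
qed

lemma encoding_part_edge:
  assumes pair: "1 \<le> i" "i < j" "j \<le> k"
  obtains r t where "(r, t) \<in> set es"
    "encoding_part n k s ! ((i - 1) * n + (r - 1))" "encoding_part n k s ! ((j - 1) * n + (t - 1))"
proof -
  obtain r t where e: "(r, t) \<in> set es"
    and X: "mismatches s (template n k) \<subseteq> mismatches (block n k i j (r, t)) (template n k)"
    and "hamming s (template n k) = dd n k"
    by (rule mismatches_solution_subset_block[OF pair])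
  note vertices = edge_vertices_bounded[OF e]
  show thesis
  proof (rule that[OF e])
    show "encoding_part n k s ! ((i - 1) * n + (r - 1))" "encoding_part n k s ! ((j - 1) * n + (t - 1))"
      using X encode_positions_less[OF pair vertices]
      by (auto simp: encoding_part_nth mismatches_block_template[OF pair vertices])
  qed
qed

lemma encoding_part_section_nonempty:
  assumes "1 \<le> p" "p \<le> k"
  obtains x where "x < n" "encoding_part n k s ! ((p - 1) * n + x)"
proof (cases "p = 1")
  case True
  obtain r t where e: "(r, t) \<in> set es" and "encoding_part n k s ! ((1 - 1) * n + (r - 1))"
    by (rule encoding_part_edge[of 1 2]) (use k in simp_all)
  then show thesis using that[of "r - 1"] True edge_vertices_bounded[OF e] by simp
next
  case False
  obtain r t where e: "(r, t) \<in> set es" and "encoding_part n k s ! ((p - 1) * n + (t - 1))"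
    by (rule encoding_part_edge[of 1 p]) (use assms False in simp_all)
  then show thesis using that[of "t - 1"] edge_vertices_bounded[OF e] by simp
qed

lemma encoding_part_section_unique:
  assumes "1 \<le> p" "p \<le> k" "x < n" "y < n"
    and "encoding_part n k s ! ((p - 1) * n + x)" "encoding_part n k s ! ((p - 1) * n + y)"
  shows "x = y"
proof (rule section_member_unique)
  let ?Y = "{q. q < k * n \<and> encoding_part n k s ! q}"
  show "card ?Y = k"
    using count_list_encoding_part
    by (simp add: count_list_True_eq_card length_encoding_part mult.commute)
  show "\<forall>p<k. \<exists>x<n. p * n + x \<in> ?Y"
  proof (intro allI impI)
    fix p assume "p < k"
    then obtain x where "x < n" "encoding_part n k s ! ((Suc p - 1) * n + x)"
      using encoding_part_section_nonempty[of "Suc p"] by auto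
    then show "\<exists>x<n. p * n + x \<in> ?Y"
      using section_index_less[of "Suc p" k x n] \<open>p < k\<close> by auto
  qed
  show "(p - 1) * n + x \<in> ?Y" "(p - 1) * n + y \<in> ?Y"
    using assms section_index_less by auto
qed (use assms in auto)

lemma encoding_part_clique:
  "\<exists>h. (\<forall>p \<in> {1..k}. 1 \<le> h p \<and> h p \<le> n \<and> enc_section n p (encoding_part n k s) = number n (h p)) \<and>
     inj_on h {1..k} \<and> (\<forall>p \<in> {1..k}. \<forall>q \<in> {1..k}. p \<noteq> q \<longrightarrow> adjacent es (h p) (h q))"
proof -
  let ?enc = "encoding_part n k s"
  have "\<forall>p\<in>{1..k}. \<exists>x. x < n \<and> ?enc ! ((p - 1) * n + x)"
    using encoding_part_section_nonempty by (metis atLeastAtMost_iff)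
  from bchoice[OF this] obtain g where g: "\<forall>p\<in>{1..k}. g p < n \<and> ?enc ! ((p - 1) * n + g p)" ..
  have g_unique: "?enc ! ((p - 1) * n + x) \<longleftrightarrow> x = g p" if "p \<in> {1..k}" "x < n" for p x
    using encoding_part_section_unique[of p x "g p"] g that by auto
  have edge: "(g p + 1, g q + 1) \<in> set es" if pq: "p \<in> {1..k}" "q \<in> {1..k}" "p < q" for p q
  proof -
    obtain r t where e: "(r, t) \<in> set es"
      and "?enc ! ((p - 1) * n + (r - 1))" "?enc ! ((q - 1) * n + (t - 1))"
      by (rule encoding_part_edge[of p q]) (use pq in auto)
    then have "g p = r - 1" "g q = t - 1"
      using g_unique[OF pq(1), of "r - 1"] g_unique[OF pq(2), of "t - 1"] edge_vertices_bounded[OF e]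
      by simp_all
    then show ?thesis using e edge_vertices_bounded[OF e] by simp
  qed
  show ?thesis
  proof (intro exI[of _ "\<lambda>p. g p + 1"] conjI ballI impI)
    fix p assume p: "p \<in> {1..k}"
    have gp: "g p < n" using g p by blast
    show "1 \<le> g p + 1" "g p + 1 \<le> n" using gp by simp_all
    show "enc_section n p ?enc = number n (g p + 1)"
      using p gp g_unique[OF p] by (intro enc_section_eq_number) (auto simp: length_encoding_part)
  next
    fix p q assume "p \<in> {1..k}" "q \<in> {1..k}" "p \<noteq> q"
    then show "adjacent es (g p + 1) (g q + 1)"
      using edge[of p q] edge[of q p] by (cases "p < q") (auto simp: adjacent_def)
  next
    show "inj_on (\<lambda>p. g p + 1) {1..k}"
    proof (rule inj_onI, rule ccontr)
      fix p q assume "p \<in> {1..k}" "q \<in> {1..k}" "g p + 1 = g q + 1" "p \<noteq> q"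
      then have "(g p + 1, g p + 1) \<in> set es" using edge[of p q] edge[of q p] by (cases "p < q") auto
      then show False using edge_bounds by blast
    qed
  qed
qed

end

theorem proposition4:
  fixes n k :: nat and es :: "(nat \<times> nat) list" and s :: "bool list"
  assumes "simple_graph n es"
    and "k \<ge> 3"
    and "is_solution n k es s"
  shows "count_list (encoding_part n k s) True = k \<and>
    (\<exists>h :: nat \<Rightarrow> nat.
       (\<forall>p \<in> {1..k}. 1 \<le> h p \<and> h p \<le> n \<and>
           enc_section n p (encoding_part n k s) = number n (h p)) \<and>
       inj_on h {1..k} \<and>
       (\<forall>p \<in> {1..k}. \<forall>q \<in> {1..k}. p \<noteq> q \<longrightarrow> adjacent es (h p) (h q)))"
  using count_list_encoding_part[OF assms] encoding_part_clique[OF assms] by blast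

end
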